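(* Let $\mathcal{T}$ be a conforming simplicial mesh in $\mathbb{R}^d$ with nodes $\{\mathbf{x}_i\}$ and adjacency matrix $\mathbf{A}$ ($\mathbf{A}_{i,j}=1$ iff nodes $i\neq j$ are joined by an edge of some cell, and $0$ otherwise). For a point $\mathbf{x}$ in a cell $T$ with vertex set $\mathcal{N}^0(T)$, define for each node $i$ $$\eta_i(\mathbf{x})=\sum_{n\in\mathcal{N}^0(T)} B_n(\mathbf{x})\,\mathbf{A}_{i,n},$$ where $B_n(\mathbf{x})$ is the barycentric coordinate of $\mathbf{x}$ with respect to vertex $n$ of $T$. Let $T_o$ and $T_n$ be two cells sharing a facet $F$, let $\mathcal{N}^1_o,\mathcal{N}^1_n$ be their 1-ring neighbour sets, $\mathcal{N}^1_r=\mathcal{N}^1_o\setminus\mathcal{N}^1_n$ and $\mathcal{N}^1_a=\mathcal{N}^1_n\setminus\mathcal{N}^1_o$. Then $\eta$ is locally diminishing on added/removed nodes: for a point crossing $F$ from $\mathbf{x}^o\in T_o$ to $\mathbf{x}^n\in T_n$ with $\|\mathbf{x}^n-\mathbf{x}^o\|=\mathcal{O}(\epsilon)$, one has $\eta_i(\mathbf{x}^o)=\mathcal{O}(\epsilon)$ for every $i\in\mathcal{N}^1_r$ (computed in $T_o$) and $\eta_i(\mathbf{x}^n)=\mathcal{O}(\epsilon)$ for every $i\in\mathcal{N}^1_a$ (computed in $T_n$).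
   Context: The 1-ring neighbour set $\mathcal{N}^1$ of a cell consists of all mesh nodes that are vertices of the cell or are joined by a mesh edge to a vertex of the cell. Barycentric coordinates of $\mathbf{x}$ in a simplex with vertices $\mathbf{x}_{n_1},\dots,\mathbf{x}_{n_{d+1}}$ are the unique numbers $B_{n_k}(\mathbf{x})$ with $\sum_k B_{n_k}=1$ and $\sum_k B_{n_k}\mathbf{x}_{n_k}=\mathbf{x}$. The constants in $\mathcal{O}(\epsilon)$ depend only on the mesh (e.g. on the distances of the vertices of $T_o,T_n$ opposite $F$ to the facet $F$). *)

theory Defs
  imports "HOL-Analysis.Analysis"
begin

text \<open>A simplicial mesh: node positions X (indexed by an abstract node type 'i),
  cells given by their vertex index sets.\<close>

definition conforming_simplicial_mesh :: "('i \<Rightarrow> 'a::euclidean_space) \<Rightarrow> 'i set set \<Rightarrow> bool" where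
  "conforming_simplicial_mesh X cells \<longleftrightarrow>
     finite cells \<and> inj_on X (\<Union>cells) \<and>
     (\<forall>T\<in>cells. card T = DIM('a) + 1 \<and> \<not> affine_dependent (X ` T)) \<and>
     (\<forall>T1\<in>cells. \<forall>T2\<in>cells.
        convex hull (X ` T1) \<inter> convex hull (X ` T2) = convex hull (X ` (T1 \<inter> T2)))"

definition adj :: "'i set set \<Rightarrow> 'i \<Rightarrow> 'i \<Rightarrow> real" where
  "adj cells i j = (if i \<noteq> j \<and> (\<exists>T\<in>cells. i \<in> T \<and> j \<in> T) then 1 else 0)"

definition bary :: "('i \<Rightarrow> 'a::real_vector) \<Rightarrow> 'i set \<Rightarrow> 'a \<Rightarrow> 'i \<Rightarrow> real" where
  "bary X T x = (THE B. (\<forall>n. n \<notin> T \<longrightarrow> B n = 0) \<and> sum B T = 1 \<and>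
                        (\<Sum>n\<in>T. B n *\<^sub>R X n) = x)"

definition eta :: "('i \<Rightarrow> 'a::real_vector) \<Rightarrow> 'i set set \<Rightarrow> 'i set \<Rightarrow> 'i \<Rightarrow> 'a \<Rightarrow> real" where
  "eta X cells T i x = (\<Sum>n\<in>T. bary X T x n * adj cells i n)"

definition one_ring :: "'i set set \<Rightarrow> 'i set \<Rightarrow> 'i set" where
  "one_ring cells T = {j \<in> \<Union>cells. j \<in> T \<or> (\<exists>v\<in>T. adj cells j v = 1)}"

end

theory Submission
  imports Defs
begin

text \<open>On the cell \<open>T\<^sub>o\<close> only the vertex \<open>a\<close> opposite the common facet \<open>F\<close> is
  adjacent to a removed node \<open>i\<close>, since such a node is adjacent to no vertex of \<open>T\<^sub>n \<supseteq> F\<close>;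
  hence \<open>\<eta>\<^sub>i(x) = B\<^sub>a(x) A\<^sub>i\<^sub>,\<^sub>a\<close>. The barycentric coordinate \<open>B\<^sub>a\<close> of \<open>T\<^sub>o\<close> is an
  affine function, nonnegative on \<open>T\<^sub>o\<close> and, because the mesh is conforming, nonpositive on
  \<open>T\<^sub>n\<close>: the two cells lie on opposite sides of the hyperplane through \<open>F\<close>. So
  \<open>0 \<le> B\<^sub>a(x\<^sup>o) \<le> B\<^sub>a(x\<^sup>o) - B\<^sub>a(x\<^sup>n)\<close>, which is at most the Lipschitz constant of \<open>B\<^sub>a\<close> times
  \<open>\<parallel>x\<^sup>n - x\<^sup>o\<parallel>\<close>. Added nodes are handled symmetrically.\<close>

lemma in_convex_hull_image_iff:
  assumes "finite S" and "inj_on X S"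
  shows "x \<in> convex hull (X ` S) \<longleftrightarrow>
         (\<exists>w. (\<forall>m\<in>S. 0 \<le> w m) \<and> sum w S = 1 \<and> (\<Sum>m\<in>S. w m *\<^sub>R X m) = x)"
proof
  assume "x \<in> convex hull (X ` S)"
  then obtain u where "\<forall>y\<in>X ` S. 0 \<le> u y" "sum u (X ` S) = 1" "(\<Sum>y\<in>X ` S. u y *\<^sub>R y) = x"
    using assms(1) by (auto simp: convex_hull_finite)
  then show "\<exists>w. (\<forall>m\<in>S. 0 \<le> w m) \<and> sum w S = 1 \<and> (\<Sum>m\<in>S. w m *\<^sub>R X m) = x"
    using assms(2) by (intro exI[of _ "u \<circ> X"]) (simp add: sum.reindex)
next
  assume "\<exists>w. (\<forall>m\<in>S. 0 \<le> w m) \<and> sum w S = 1 \<and> (\<Sum>m\<in>S. w m *\<^sub>R X m) = x"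
  then obtain w where "\<forall>m\<in>S. 0 \<le> w m" "sum w S = 1" "(\<Sum>m\<in>S. w m *\<^sub>R X m) = x"
    by blast
  then show "x \<in> convex hull (X ` S)"
    using convex_sum[OF assms(1) convex_convex_hull, of w X "X ` S"] by (auto intro: hull_inc)
qed

lemma small_convex_step_pos:
  fixes \<beta> :: "'i \<Rightarrow> real"
  assumes "finite F" and "c > 0"
  obtains t where "0 < t" "t \<le> 1" "\<forall>f\<in>F. 0 < (1 - t) * c + t * \<beta> f"
proof -
  have "((\<lambda>t. (1 - t) * c + t * \<beta> f) \<longlongrightarrow> c) (at_right 0)" for f
    by (auto intro!: tendsto_eq_intros)
  then have "\<forall>\<^sub>F t in at_right 0. 0 < (1 - t) * c + t * \<beta> f" for f
    using assms(2) by (rule order_tendstoD(1))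
  then have "\<forall>\<^sub>F t in at_right 0. \<forall>f\<in>F. 0 < (1 - t) * c + t * \<beta> f"
    using assms(1) by (intro eventually_ball_finite) auto
  moreover have "\<forall>\<^sub>F t in at_right (0::real). 0 < t \<and> t \<le> 1"
    using eventually_at_right_real[of 0 1] by (auto elim: eventually_mono)
  ultimately obtain t where "0 < t \<and> t \<le> 1 \<and> (\<forall>f\<in>F. 0 < (1 - t) * c + t * \<beta> f)"
    using eventually_happens'[OF trivial_limit_at_right_real] eventually_conj by blast
  then show thesis using that by blast
qed

definition bary_coords :: "('i \<Rightarrow> 'a::real_vector) \<Rightarrow> 'i set \<Rightarrow> 'a \<Rightarrow> ('i \<Rightarrow> real) \<Rightarrow> bool" where
  "bary_coords X T x B \<longleftrightarrow>
     (\<forall>n. n \<notin> T \<longrightarrow> B n = 0) \<and> sum B T = 1 \<and> (\<Sum>n\<in>T. B n *\<^sub>R X n) = x"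

locale full_simplex =
  fixes X :: "'i \<Rightarrow> 'a::euclidean_space" and T :: "'i set"
  assumes inj: "inj_on X T"
    and indep: "\<not> affine_dependent (X ` T)"
    and card_vertices: "card T = DIM('a) + 1"
begin

lemma finite_vertices: "finite T"
  using card_vertices by (simp add: card_ge_0_finite)

lemma bary_coords_unique:
  assumes B: "bary_coords X T x B" and B': "bary_coords X T x B'"
  shows "B = B'"
proof (rule ccontr)
  assume "B \<noteq> B'"
  then obtain n where n: "B n \<noteq> B' n"
    by blast
  with B B' have "n \<in> T"
    unfolding bary_coords_def by metis
  define u where "u y = B (inv_into T X y) - B' (inv_into T X y)" for y
  have "sum u (X ` T) = 0" and "(\<Sum>y\<in>X ` T. u y *\<^sub>R y) = 0"
    using B B' inj
    by (simp_all add: bary_coords_def u_def sum.reindex sum_subtractf scaleR_diff_left)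
  moreover have "X n \<in> X ` T" "u (X n) \<noteq> 0"
    using n \<open>n \<in> T\<close> inj by (auto simp: u_def)
  ultimately have "affine_dependent (X ` T)"
    unfolding affine_dependent_explicit_finite[OF finite_imageI[OF finite_vertices]] by blast
  with indep show False ..
qed

lemma bary_eqI: "bary_coords X T x B \<Longrightarrow> bary X T x = B"
  unfolding bary_def bary_coords_def[symmetric]
  by (blast intro: the_equality bary_coords_unique)

lemma bary_coords_bary: "bary_coords X T x (bary X T x)"
proof -
  have "aff_dim (X ` T) = DIM('a)"
    using aff_dim_affine_independent[OF indep] card_vertices inj by (simp add: card_image)
  then have "x \<in> affine hull (X ` T)"
    using aff_dim_eq_full by blast
  then obtain u where u: "sum u (X ` T) = 1" "(\<Sum>y\<in>X ` T. u y *\<^sub>R y) = x"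
    using finite_vertices by (auto simp: affine_hull_finite)
  have "bary_coords X T x (\<lambda>n. if n \<in> T then u (X n) else 0)"
    using u inj finite_vertices by (simp add: bary_coords_def sum.reindex)
  then show ?thesis
    by (simp add: bary_eqI)
qed

lemma bary_outside: "n \<notin> T \<Longrightarrow> bary X T x n = 0"
  and sum_bary: "sum (bary X T x) T = 1"
  and sum_bary_scaleR: "(\<Sum>n\<in>T. bary X T x n *\<^sub>R X n) = x"
  using bary_coords_bary by (simp_all add: bary_coords_def)

lemma bary_vertex: "m \<in> T \<Longrightarrow> bary X T (X m) = (\<lambda>n. if n = m then 1 else 0)"
  by (rule bary_eqI) (auto simp: bary_coords_def finite_vertices if_distrib[where f="\<lambda>c. c *\<^sub>R _"] cong: if_cong)

lemma bary_affine_combination: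
  assumes "finite I" and "sum w I = 1"
  shows "bary X T (\<Sum>j\<in>I. w j *\<^sub>R y j) = (\<lambda>n. \<Sum>j\<in>I. w j * bary X T (y j) n)"
proof (rule bary_eqI)
  have "(\<Sum>n\<in>T. \<Sum>j\<in>I. w j * bary X T (y j) n) = (\<Sum>j\<in>I. w j)"
    by (subst sum.swap) (simp add: sum_distrib_left[symmetric] sum_bary)
  moreover have "(\<Sum>n\<in>T. (\<Sum>j\<in>I. w j * bary X T (y j) n) *\<^sub>R X n)
      = (\<Sum>j\<in>I. w j *\<^sub>R (\<Sum>n\<in>T. bary X T (y j) n *\<^sub>R X n))"
    by (simp add: scaleR_sum_left scaleR_sum_right sum.swap[of _ T])
  ultimately show "bary_coords X T (\<Sum>j\<in>I. w j *\<^sub>R y j) (\<lambda>n. \<Sum>j\<in>I. w j * bary X T (y j) n)"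
    using assms(2) by (simp add: bary_coords_def bary_outside sum_bary_scaleR)
qed

lemma bary_segment:
  "bary X T ((1 - t) *\<^sub>R x + t *\<^sub>R y) n = (1 - t) * bary X T x n + t * bary X T y n"
  using bary_affine_combination[of "{False, True}" "\<lambda>j. if j then t else 1 - t" "\<lambda>j. if j then y else x"]
  by simp

lemma bary_add: "bary X T (x + y) n = bary X T x n + bary X T y n - bary X T 0 n"
proof -
  have "bary_coords X T (x + y) (\<lambda>n. bary X T x n + bary X T y n - bary X T 0 n)"
    by (simp add: bary_coords_def bary_outside sum.distrib sum_subtractf sum_bary
        scaleR_add_left scaleR_diff_left sum_bary_scaleR)
  from bary_eqI[OF this] show ?thesis
    by simp
qed

lemma linear_bary: "linear (\<lambda>v. bary X T v n - bary X T 0 n)"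
proof (rule linearI)
  fix c v
  show "bary X T (c *\<^sub>R v) n - bary X T 0 n = c *\<^sub>R (bary X T v n - bary X T 0 n)"
    using bary_segment[of c 0 v] by (simp add: algebra_simps)
qed (simp add: bary_add)

lemma bary_lipschitz: "\<exists>K. \<forall>x y. \<bar>bary X T x n - bary X T y n\<bar> \<le> K * norm (x - y)"
proof -
  obtain K where K: "\<And>v. norm (bary X T v n - bary X T 0 n) \<le> norm v * K"
    using linear_bary linear_conv_bounded_linear bounded_linear.bounded by blast
  have "\<bar>bary X T x n - bary X T y n\<bar> \<le> K * norm (x - y)" for x y
    using K[of "x - y"] linear_diff[OF linear_bary, of x y] by (simp add: mult.commute)
  then show ?thesis
    by blast
qed

lemma bary_vertex_combination:
  assumes "S \<subseteq> T" and "sum w S = 1"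
  shows "bary X T (\<Sum>m\<in>S. w m *\<^sub>R X m) = (\<lambda>n. if n \<in> S then w n else 0)"
proof -
  have "finite S"
    using assms(1) finite_vertices finite_subset by blast
  then show ?thesis
    using assms by (simp add: bary_affine_combination bary_vertex subset_iff if_distrib cong: if_cong)
qed

lemma bary_on_face:
  assumes "S \<subseteq> T" and "x \<in> convex hull (X ` S)"
  shows "0 \<le> bary X T x n" and "n \<notin> S \<Longrightarrow> bary X T x n = 0"
proof -
  have "finite S" "inj_on X S"
    using assms(1) finite_vertices inj finite_subset inj_on_subset by blast+
  then obtain w where "\<forall>m\<in>S. 0 \<le> w m" "sum w S = 1" "x = (\<Sum>m\<in>S. w m *\<^sub>R X m)"
    using assms(2) by (auto simp: in_convex_hull_image_iff)
  then show "0 \<le> bary X T x n" and "n \<notin> S \<Longrightarrow> bary X T x n = 0"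
    using assms(1) by (simp_all add: bary_vertex_combination)
qed

lemma in_convex_hull_if_bary_nonneg:
  assumes "\<forall>n\<in>T. 0 \<le> bary X T x n"
  shows "x \<in> convex hull (X ` T)"
  unfolding in_convex_hull_image_iff[OF finite_vertices inj]
  using assms sum_bary sum_bary_scaleR by blast

end

lemma mesh_cell_full_simplex:
  "conforming_simplicial_mesh X cells \<Longrightarrow> T \<in> cells \<Longrightarrow> full_simplex X T"
  unfolding conforming_simplicial_mesh_def full_simplex_def
  by (meson Union_upper inj_on_subset)

lemma mesh_convex_hull_Int:
  "conforming_simplicial_mesh X cells \<Longrightarrow> T1 \<in> cells \<Longrightarrow> T2 \<in> cells \<Longrightarrow>
     convex hull (X ` T1) \<inter> convex hull (X ` T2) = convex hull (X ` (T1 \<inter> T2))"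
  unfolding conforming_simplicial_mesh_def by blast

lemma bary_opposite_vertex_nonpos:
  fixes X :: "'i \<Rightarrow> 'a::euclidean_space"
  assumes mesh: "conforming_simplicial_mesh X cells"
    and cells: "To \<in> cells" "Tn \<in> cells"
    and a: "To - Tn = {a}" and b: "Tn - To = {b}"
  shows "bary X To (X b) a \<le> 0"
\<comment> \<open>Otherwise a point of \<open>T\<^sub>n\<close> near the barycentre of the facet, pushed slightly towards
  \<open>X b\<close>, would have positive \<open>T\<^sub>o\<close>-coordinates and so lie in both cells but off the facet.\<close>
proof (rule ccontr)
  interpret o: full_simplex X To by (rule mesh_cell_full_simplex[OF mesh cells(1)])
  interpret n: full_simplex X Tn by (rule mesh_cell_full_simplex[OF mesh cells(2)])
  define F where "F = To \<inter> Tn"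
  define \<beta> where "\<beta> = bary X To (X b)"
  assume "\<not> \<beta> a \<le> 0"
  have To: "To = insert a F" "a \<notin> F" and Tn: "Tn = insert b F" "b \<notin> F"
    using a b by (auto simp: F_def)
  have "finite F" "card F = DIM('a)"
    using To o.finite_vertices o.card_vertices by auto
  define c where "c = 1 / real (card F)"
  have "0 < c"
    using \<open>card F = DIM('a)\<close> by (simp add: c_def)
  obtain t where t: "0 < t" "t \<le> 1" "\<forall>f\<in>F. 0 < (1 - t) * c + t * \<beta> f"
    using small_convex_step_pos[OF \<open>finite F\<close> \<open>0 < c\<close>] by blast
  define w where "w m = (if m \<in> F then (1 - t) * c else t)" for m
  define q where "q = (\<Sum>m\<in>Tn. w m *\<^sub>R X m)"
  have "sum w Tn = 1"
    using Tn \<open>finite F\<close> \<open>card F = DIM('a)\<close> by (simp add: w_def c_def)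
  have "q \<in> convex hull (X ` Tn)"
    unfolding q_def in_convex_hull_image_iff[OF n.finite_vertices n.inj]
    using \<open>sum w Tn = 1\<close> t(1,2) \<open>0 < c\<close> by (intro exI[of _ w]) (simp add: w_def)
  have bary_q: "bary X To q n = t * \<beta> n + (if n \<in> F then (1 - t) * c else 0)" for n
  proof -
    have "bary X To q n = t * \<beta> n + (\<Sum>m\<in>F. (1 - t) * c * bary X To (X m) n)"
      using o.bary_affine_combination[OF n.finite_vertices \<open>sum w Tn = 1\<close>] Tn \<open>finite F\<close>
      by (simp add: q_def w_def \<beta>_def)
    also have "(\<Sum>m\<in>F. (1 - t) * c * bary X To (X m) n) = (\<Sum>m\<in>F. if n = m then (1 - t) * c else 0)"
      by (intro sum.cong) (auto simp: o.bary_vertex F_def)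
    also have "\<dots> = (if n \<in> F then (1 - t) * c else 0)"
      using \<open>finite F\<close> by simp
    finally show ?thesis .
  qed
  have "q \<in> convex hull (X ` To)"
  proof (rule o.in_convex_hull_if_bary_nonneg, rule ballI)
    fix n assume "n \<in> To"
    then consider "n = a" | "n \<in> F"
      using To(1) by blast
    then show "0 \<le> bary X To q n"
      using t \<open>\<not> \<beta> a \<le> 0\<close> To(2) by cases (auto simp: bary_q less_imp_le)
  qed
  then have "q \<in> convex hull (X ` F)"
    using \<open>q \<in> convex hull (X ` Tn)\<close> mesh_convex_hull_Int[OF mesh cells] by (auto simp: F_def)
  then have "bary X To q a = 0"
    using To by (intro o.bary_on_face(2)) auto
  with \<open>\<not> \<beta> a \<le> 0\<close> t(1) To(2) show False
    by (simp add: bary_q)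
qed

lemma bary_nonpos_on_neighbour_cell:
  fixes X :: "'i \<Rightarrow> 'a::euclidean_space"
  assumes mesh: "conforming_simplicial_mesh X cells"
    and cells: "To \<in> cells" "Tn \<in> cells"
    and a: "To - Tn = {a}" and b: "Tn - To = {b}"
    and xn: "xn \<in> convex hull (X ` Tn)"
  shows "bary X To xn a \<le> 0"
proof -
  interpret o: full_simplex X To by (rule mesh_cell_full_simplex[OF mesh cells(1)])
  interpret n: full_simplex X Tn by (rule mesh_cell_full_simplex[OF mesh cells(2)])
  obtain w where w: "\<forall>m\<in>Tn. 0 \<le> w m" "sum w Tn = 1" "xn = (\<Sum>m\<in>Tn. w m *\<^sub>R X m)"
    using xn n.finite_vertices n.inj by (auto simp: in_convex_hull_image_iff)
  have "bary X To xn a = (\<Sum>m\<in>Tn. w m * bary X To (X m) a)"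
    using o.bary_affine_combination[OF n.finite_vertices w(2)] w(3) by simp
  also have "\<dots> \<le> 0"
  proof (rule sum_nonpos)
    fix m assume "m \<in> Tn"
    then have "m = b \<or> m \<in> To - {a}"
      using a b by blast
    then show "w m * bary X To (X m) a \<le> 0"
      using w(1) \<open>m \<in> Tn\<close> bary_opposite_vertex_nonpos[OF mesh cells a b]
      by (auto simp: o.bary_vertex mult_nonneg_nonpos)
  qed
  finally show ?thesis .
qed

lemma eta_removed_node:
  assumes "finite To" and a: "To - Tn = {a}"
    and i: "i \<in> one_ring cells To - one_ring cells Tn"
  shows "eta X cells To i x = bary X To x a * adj cells i a"
proof -
  have "adj cells i n = 0" if "n \<in> Tn" for n
    using i that by (auto simp: one_ring_def adj_def split: if_splits)
  then have "eta X cells To i x = (\<Sum>n\<in>{a}. bary X To x n * adj cells i n)"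
    unfolding eta_def using assms(1) a by (intro sum.mono_neutral_right) auto
  then show ?thesis
    by simp
qed

lemma eta_removed_node_bound:
  fixes X :: "'i \<Rightarrow> 'a::euclidean_space"
  assumes mesh: "conforming_simplicial_mesh X cells"
    and cells: "To \<in> cells" "Tn \<in> cells"
    and a: "To - Tn = {a}" and b: "Tn - To = {b}"
  shows "\<exists>K. \<forall>xo\<in>convex hull (X ` To). \<forall>xn\<in>convex hull (X ` Tn).
           \<forall>i\<in>one_ring cells To - one_ring cells Tn. \<bar>eta X cells To i xo\<bar> \<le> K * norm (xn - xo)"
proof -
  interpret o: full_simplex X To by (rule mesh_cell_full_simplex[OF mesh cells(1)])
  obtain K where K: "\<And>x y. \<bar>bary X To x a - bary X To y a\<bar> \<le> K * norm (x - y)"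
    using o.bary_lipschitz by blast
  have "\<bar>eta X cells To i xo\<bar> \<le> K * norm (xn - xo)"
    if xo: "xo \<in> convex hull (X ` To)" and xn: "xn \<in> convex hull (X ` Tn)"
      and i: "i \<in> one_ring cells To - one_ring cells Tn" for xo xn i
  proof -
    have "\<bar>eta X cells To i xo\<bar> \<le> bary X To xo a"
      using eta_removed_node[OF o.finite_vertices a i, of X xo] o.bary_on_face(1)[OF order_refl xo]
      by (simp add: adj_def abs_mult)
    also have "\<dots> \<le> bary X To xo a - bary X To xn a"
      using bary_nonpos_on_neighbour_cell[OF mesh cells a b xn] by simp
    also have "\<dots> \<le> K * norm (xn - xo)"
      using K[of xo xn] by (simp add: norm_minus_commute)
    finally show ?thesis .
  qed
  then show ?thesis
    by blast
qed

theorem mainTheorem2: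
  fixes X :: "'i \<Rightarrow> 'a::euclidean_space" and cells :: "'i set set" and To Tn :: "'i set"
  assumes "conforming_simplicial_mesh X cells"
    and "To \<in> cells" and "Tn \<in> cells" and "To \<noteq> Tn"
    and "card (To \<inter> Tn) = DIM('a)"
  shows "\<exists>C. \<forall>xo\<in>convex hull (X ` To). \<forall>xn\<in>convex hull (X ` Tn).
           (\<forall>i\<in>one_ring cells To - one_ring cells Tn.
               \<bar>eta X cells To i xo\<bar> \<le> C * norm (xn - xo)) \<and>
           (\<forall>i\<in>one_ring cells Tn - one_ring cells To.
               \<bar>eta X cells Tn i xn\<bar> \<le> C * norm (xn - xo))"
proof -
  interpret o: full_simplex X To by (rule mesh_cell_full_simplex[OF assms(1,2)])
  interpret n: full_simplex X Tn by (rule mesh_cell_full_simplex[OF assms(1,3)])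
  have "card (To - Tn) = 1" "card (Tn - To) = 1"
    using card_Diff_subset_Int[of To Tn] card_Diff_subset_Int[of Tn To] assms(5)
      o.finite_vertices o.card_vertices n.finite_vertices n.card_vertices
    by (simp_all add: Int_commute)
  then obtain a b where a: "To - Tn = {a}" and b: "Tn - To = {b}"
    by (meson card_1_singletonE)
  obtain K1 where K1: "\<forall>xo\<in>convex hull (X ` To). \<forall>xn\<in>convex hull (X ` Tn).
      \<forall>i\<in>one_ring cells To - one_ring cells Tn. \<bar>eta X cells To i xo\<bar> \<le> K1 * norm (xn - xo)"
    using eta_removed_node_bound[OF assms(1-3) a b] by blast
  obtain K2 where K2: "\<forall>xn\<in>convex hull (X ` Tn). \<forall>xo\<in>convex hull (X ` To).
      \<forall>i\<in>one_ring cells Tn - one_ring cells To. \<bar>eta X cells Tn i xn\<bar> \<le> K2 * norm (xo - xn)"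
    using eta_removed_node_bound[OF assms(1,3,2) b a] by blast
  show ?thesis
  proof (intro exI[of _ "max K1 K2"] ballI conjI)
    fix xo xn i
    assume xo: "xo \<in> convex hull (X ` To)" and xn: "xn \<in> convex hull (X ` Tn)"
    have "K1 \<le> max K1 K2" "K2 \<le> max K1 K2" and "norm (xo - xn) = norm (xn - xo)"
      by (simp_all add: norm_minus_commute)
    then show "i \<in> one_ring cells To - one_ring cells Tn \<Longrightarrow>
        \<bar>eta X cells To i xo\<bar> \<le> max K1 K2 * norm (xn - xo)"
      and "i \<in> one_ring cells Tn - one_ring cells To \<Longrightarrow>
        \<bar>eta X cells Tn i xn\<bar> \<le> max K1 K2 * norm (xn - xo)"
      using K1 K2 xo xn by (metis mult_right_mono norm_ge_zero order_trans)+
  qed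
qed

end
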